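(* For any $k,d$ and $\rho$, a Bayes-optimal strategy for $\mathrm{Sing}(k,q_{HC})$ is: the learner keeps all of its data, and on a test point $z$ outputs the label of the training example closest to $z$ in Hamming distance.
   Context: Component distribution $q_{HC}$ (dimension $d$, $\rho\in[0,1]$): a subpopulation has $\mathcal I\subseteq[d]$ containing each index independently w.p. $\rho$ and uniform bits $b(i)$, $i\in\mathcal I$; an example from it is $z\in\{0,1\}^d$ with $z(i)=b(i)$ on $\mathcal I$ and independent uniform bits elsewhere. Task $\mathrm{Sing}(k,q_{HC})$: draw $k$ subpopulations i.i.d. from $q_{HC}$ and one example $x_j$ from subpopulation $j$, $j\in[k]$; the learner receives $(x_1,\dots,x_k)$ (example $x_j$ has label $j$); an index $j^*$ is uniform in $[k]$ and a fresh test point $z$ is drawn from subpopulation $j^*$; the learner must output $j^*$. *)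

theory Defs
  imports "HOL-Probability.Probability"
begin

text \<open>Points of the hypercube {0,1}^d are modelled as functions nat => bool
  that are False outside {..<d}. Coordinates and labels are 0-indexed.\<close>

type_synonym point = "nat \<Rightarrow> bool"

text \<open>A subpopulation is a pair (I, b): I is the indicator of the index set
  (each index in {..<d} included independently with probability rho), and b
  gives uniform bits on the indices in I.\<close>

definition subpop_pmf :: "nat \<Rightarrow> real \<Rightarrow> (point \<times> point) pmf" where
  "subpop_pmf d \<rho> =
     bind_pmf (Pi_pmf {..<d} False (\<lambda>_. bernoulli_pmf \<rho>)) (\<lambda>I.
     bind_pmf (Pi_pmf {i. i < d \<and> I i} False (\<lambda>_. bernoulli_pmf (1/2))) (\<lambda>b.
     return_pmf (I, b)))"

definition example_pmf :: "nat \<Rightarrow> point \<times> point \<Rightarrow> point pmf" where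
  "example_pmf d Ib =
     bind_pmf (Pi_pmf {..<d} False (\<lambda>_. bernoulli_pmf (1/2))) (\<lambda>u.
     return_pmf (\<lambda>i. if fst Ib i then snd Ib i else u i))"

text \<open>The task Sing(k, q_HC): joint distribution of the training examples
  X (example X j has label j, j < k), the hidden index j*, and the test point z.\<close>

definition sing_pmf :: "nat \<Rightarrow> nat \<Rightarrow> real \<Rightarrow> ((nat \<Rightarrow> point) \<times> nat \<times> point) pmf" where
  "sing_pmf k d \<rho> =
     bind_pmf (Pi_pmf {..<k} (\<lambda>_. False, \<lambda>_. False) (\<lambda>_. subpop_pmf d \<rho>)) (\<lambda>S.
     bind_pmf (Pi_pmf {..<k} (\<lambda>_. False) (\<lambda>j. example_pmf d (S j))) (\<lambda>X.
     bind_pmf (pmf_of_set {..<k}) (\<lambda>j.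
     bind_pmf (example_pmf d (S j)) (\<lambda>z.
     return_pmf (X, j, z)))))"

definition success_prob ::
  "nat \<Rightarrow> nat \<Rightarrow> real \<Rightarrow> ((nat \<Rightarrow> point) \<Rightarrow> point \<Rightarrow> nat pmf) \<Rightarrow> real" where
  "success_prob k d \<rho> L =
     measure_pmf.expectation (sing_pmf k d \<rho>) (\<lambda>(X, j, z). pmf (L X z) j)"

definition hamming :: "nat \<Rightarrow> point \<Rightarrow> point \<Rightarrow> nat" where
  "hamming d x y = card {i. i < d \<and> x i \<noteq> y i}"

definition nearest_neighbor_rule :: "nat \<Rightarrow> nat \<Rightarrow> ((nat \<Rightarrow> point) \<Rightarrow> point \<Rightarrow> nat) \<Rightarrow> bool" where
  "nearest_neighbor_rule k d g \<longleftrightarrow>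
     (\<forall>X z. g X z < k \<and> (\<forall>j<k. hamming d (X (g X z)) z \<le> hamming d (X j) z))"

end

theory Submission
  imports Defs
begin

text \<open>Given the training data X and the test point z, the joint probability of the
  hidden label j is proportional to the product of the densities m of the examples
  X l with l \<noteq> j and the density p (X j, z) of two examples drawn from one common
  subpopulation. Every example is marginally uniform on the cube, while p (x, z)
  factorises over coordinates into ((1 - \<rho>)/4)^h (\<rho>/2 + (1 - \<rho>)/4)^(d - h), h the
  Hamming distance of x and z, which is non-increasing in h. So the nearest neighbour
  maximises the posterior, and a maximum a posteriori rule beats every randomised learner.\<close>

lemma integrable_measure_pmf_bounded:
  fixes f :: "'a \<Rightarrow> real"
  assumes "\<And>x. 0 \<le> f x" "\<And>x. f x \<le> B"
  shows "integrable (measure_pmf M) f"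
  by (rule measure_pmf.integrable_const_bound[where B=B])
     (use assms in \<open>auto intro!: AE_pmfI abs_leI order_trans[OF _ assms(2)]\<close>)

lemma expectation_bind_pmf_bounded:
  fixes f :: "'b \<Rightarrow> real"
  assumes nonneg: "\<And>x. 0 \<le> f x" and bounded: "\<And>x. f x \<le> B"
  shows "measure_pmf.expectation (bind_pmf M N) f =
    measure_pmf.expectation M (\<lambda>x. measure_pmf.expectation (N x) f)"
proof -
  have int: "integrable (measure_pmf P) f" for P
    using nonneg bounded by (rule integrable_measure_pmf_bounded)
  have int_outer: "integrable (measure_pmf M) (\<lambda>x. measure_pmf.expectation (N x) f)"
    by (rule integrable_measure_pmf_bounded[where B=B])
       (auto intro!: Bochner_Integration.integral_nonneg measure_pmf.integral_le_const
         int nonneg bounded)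
  have "ennreal (measure_pmf.expectation (bind_pmf M N) f) = (\<integral>\<^sup>+x. f x \<partial>bind_pmf M N)"
    by (rule nn_integral_eq_integral[symmetric]) (use int nonneg in auto)
  also have "\<dots> = (\<integral>\<^sup>+x. \<integral>\<^sup>+y. f y \<partial>N x \<partial>M)" by simp
  also have "\<dots> = (\<integral>\<^sup>+x. ennreal (measure_pmf.expectation (N x) f) \<partial>M)"
    by (intro nn_integral_cong nn_integral_eq_integral) (use int nonneg in auto)
  also have "\<dots> = ennreal (measure_pmf.expectation M (\<lambda>x. measure_pmf.expectation (N x) f))"
    by (rule nn_integral_eq_integral)
       (use int_outer nonneg in \<open>auto intro!: Bochner_Integration.integral_nonneg\<close>)
  finally show ?thesis
    by (subst (asm) ennreal_inj) (auto intro!: Bochner_Integration.integral_nonneg nonneg)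
qed

lemma pmf_bind_map_Pair:
  "pmf (bind_pmf P (\<lambda>a. map_pmf (Pair a) (R a))) (a0, r0) = pmf P a0 * pmf (R a0) r0"
proof -
  have "pmf (map_pmf (Pair a) (R a)) (a0, r0) = indicator {a0} a * pmf (R a0) r0" for a
    by (cases "a = a0") (auto simp: pmf_map_inj' inj_on_def pmf_eq_0_set_pmf)
  then have "pmf (bind_pmf P (\<lambda>a. map_pmf (Pair a) (R a))) (a0, r0)
        = measure_pmf.expectation P (\<lambda>a. indicator {a0} a * pmf (R a0) r0)"
    unfolding pmf_bind by simp
  also have "\<dots> = pmf P a0 * pmf (R a0) r0"
    by (subst integral_measure_pmf_real[where A="{a0}"]) (auto simp: indicator_def)
  finally show ?thesis .
qed

lemma expectation_randomized_rule_le_MAP_rule: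
  fixes M :: "('a \<times> 'b \<times> 'c) pmf" and L :: "'a \<Rightarrow> 'c \<Rightarrow> 'b pmf"
  assumes finite: "finite (set_pmf M)"
    and MAP: "\<And>x j z. pmf M (x, j, z) \<le> pmf M (x, g x z, z)"
  shows "measure_pmf.expectation M (\<lambda>(x, j, z). pmf (L x z) j)
    \<le> measure_pmf.expectation M (\<lambda>(x, j, z). pmf (return_pmf (g x z)) j)"
proof -
  define A where "A = fst ` set_pmf M"
  define Z where "Z = snd ` snd ` set_pmf M"
  define J where "J = fst ` snd ` set_pmf M \<union> case_prod g ` (A \<times> Z)"
  have fin: "finite A" "finite Z" "finite J"
    using finite by (auto simp: A_def Z_def J_def)
  have expectation_eq: "measure_pmf.expectation M f = (\<Sum>x\<in>A. \<Sum>z\<in>Z. \<Sum>j\<in>J. pmf M (x, j, z) * f (x, j, z))"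
    for f :: "'a \<times> 'b \<times> 'c \<Rightarrow> real"
  proof -
    have "measure_pmf.expectation M f = (\<Sum>(x, j, z)\<in>A \<times> J \<times> Z. pmf M (x, j, z) * f (x, j, z))"
      using fin by (subst integral_measure_pmf_real[where A="A \<times> J \<times> Z"])
        (auto simp: A_def J_def Z_def mult.commute intro!: sum.cong image_eqI)
    also have "\<dots> = (\<Sum>x\<in>A. \<Sum>j\<in>J. \<Sum>z\<in>Z. pmf M (x, j, z) * f (x, j, z))"
      by (simp add: sum.cartesian_product)
    also have "\<dots> = (\<Sum>x\<in>A. \<Sum>z\<in>Z. \<Sum>j\<in>J. pmf M (x, j, z) * f (x, j, z))"
      by (intro sum.cong refl sum.swap)
    finally show ?thesis .
  qed
  have inner: "(\<Sum>j\<in>J. pmf M (x, j, z) * pmf (L x z) j)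
      \<le> (\<Sum>j\<in>J. pmf M (x, j, z) * pmf (return_pmf (g x z)) j)" if "x \<in> A" "z \<in> Z" for x z
  proof -
    have "(\<Sum>j\<in>J. pmf M (x, j, z) * pmf (L x z) j) \<le> (\<Sum>j\<in>J. pmf M (x, g x z, z) * pmf (L x z) j)"
      by (intro sum_mono mult_right_mono MAP) simp
    also have "\<dots> = pmf M (x, g x z, z) * measure_pmf.prob (L x z) J"
      by (simp add: sum_distrib_left measure_measure_pmf_finite fin)
    also have "\<dots> \<le> pmf M (x, g x z, z)"
      by (simp add: mult_left_le)
    also have "\<dots> = (\<Sum>j\<in>J. pmf M (x, j, z) * pmf (return_pmf (g x z)) j)"
    proof -
      have "g x z \<in> J" using that by (auto simp: J_def)
      then show ?thesis using fin by (simp add: indicator_def Int_absorb1)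
    qed
    finally show ?thesis .
  qed
  show ?thesis
    unfolding expectation_eq using inner by (simp add: sum_mono)
qed

lemma power_mult_power_antimono:
  fixes A B :: "'a :: linordered_semidom"
  assumes "0 \<le> B" "B \<le> A" "a \<le> b" "b \<le> n"
  shows "B ^ b * A ^ (n - b) \<le> B ^ a * A ^ (n - a)"
proof -
  have "B ^ b * A ^ (n - b) = B ^ a * B ^ (b - a) * A ^ (n - b)"
    using assms(3) by (simp add: power_add[symmetric])
  also have "\<dots> \<le> B ^ a * A ^ (b - a) * A ^ (n - b)"
    using assms(1,2) by (intro mult_right_mono mult_left_mono power_mono) auto
  also have "\<dots> = B ^ a * A ^ (n - a)"
    using assms(3,4) by (simp add: mult.assoc power_add[symmetric])
  finally show ?thesis .
qed

definition singleton_task ::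
  "nat \<Rightarrow> 's \<Rightarrow> 's pmf \<Rightarrow> 'x \<Rightarrow> ('s \<Rightarrow> 'x pmf) \<Rightarrow> ((nat \<Rightarrow> 'x) \<times> nat \<times> 'x) pmf" where
  "singleton_task k s0 Q x0 E =
     bind_pmf (Pi_pmf {..<k} s0 (\<lambda>_. Q)) (\<lambda>S.
     bind_pmf (Pi_pmf {..<k} x0 (\<lambda>j. E (S j))) (\<lambda>X.
     bind_pmf (pmf_of_set {..<k}) (\<lambda>j.
     bind_pmf (E (S j)) (\<lambda>z. return_pmf (X, j, z)))))"

lemma sing_pmf_eq_singleton_task:
  "sing_pmf k d \<rho> =
    singleton_task k (\<lambda>_. False, \<lambda>_. False) (subpop_pmf d \<rho>) (\<lambda>_. False) (example_pmf d)"
  by (simp add: sing_pmf_def singleton_task_def)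

lemma singleton_task_eq_map_Pair:
  "singleton_task k s0 Q x0 E =
     bind_pmf (Pi_pmf {..<k} s0 (\<lambda>_. Q)) (\<lambda>S.
     bind_pmf (Pi_pmf {..<k} x0 (\<lambda>j. E (S j))) (\<lambda>X.
     map_pmf (Pair X) (bind_pmf (pmf_of_set {..<k}) (\<lambda>j. map_pmf (Pair j) (E (S j))))))"
  unfolding singleton_task_def map_pmf_def by (simp add: bind_assoc_pmf bind_return_pmf)

lemma pmf_singleton_task_eq_expectation:
  assumes "k \<ge> 1"
  shows "pmf (singleton_task k s0 Q x0 E) (X, j, z) =
    measure_pmf.expectation (Pi_pmf {..<k} s0 (\<lambda>_. Q)) (\<lambda>S.
      (if \<forall>l. l \<notin> {..<k} \<longrightarrow> X l = x0 then \<Prod>l<k. pmf (E (S l)) (X l) else 0)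
      * (indicator {..<k} j / real k * pmf (E (S j)) z))"
proof -
  have "{..<k} \<noteq> {}" using assms by (simp add: lessThan_empty_iff)
  then have "pmf (bind_pmf (Pi_pmf {..<k} x0 (\<lambda>j. E (S j))) (\<lambda>X.
       map_pmf (Pair X) (bind_pmf (pmf_of_set {..<k}) (\<lambda>j. map_pmf (Pair j) (E (S j)))))) (X, j, z)
     = (if \<forall>l. l \<notin> {..<k} \<longrightarrow> X l = x0 then \<Prod>l<k. pmf (E (S l)) (X l) else 0)
       * (indicator {..<k} j / real k * pmf (E (S j)) z)" for S
    by (simp add: pmf_bind_map_Pair pmf_Pi)
  then show ?thesis
    unfolding singleton_task_eq_map_Pair pmf_bind[of "Pi_pmf {..<k} s0 (\<lambda>_. Q)"] by simp
qed

lemma pmf_singleton_task: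
  assumes "k \<ge> 1"
  shows "pmf (singleton_task k s0 Q x0 E) (X, j, z) =
    (if j < k \<and> (\<forall>l. l \<notin> {..<k} \<longrightarrow> X l = x0)
     then (\<Prod>l\<in>{..<k}-{j}. pmf (bind_pmf Q E) (X l))
       * pmf (bind_pmf Q (\<lambda>s. pair_pmf (E s) (E s))) (X j, z) / k
     else 0)"
proof (cases "j < k \<and> (\<forall>l. l \<notin> {..<k} \<longrightarrow> X l = x0)")
  case True
  define F where "F = (\<lambda>l s. pmf (E s) (X l) * (if l = j then pmf (E s) z else 1))"
  have "pmf (singleton_task k s0 Q x0 E) (X, j, z) =
      measure_pmf.expectation (Pi_pmf {..<k} s0 (\<lambda>_. Q)) (\<lambda>S. (\<Prod>l<k. F l (S l)) / real k)"
    using True by (simp add: pmf_singleton_task_eq_expectation[OF assms] F_def prod.distrib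
        prod.delta indicator_def)
  also have "\<dots> = measure_pmf.expectation (Pi_pmf {..<k} s0 (\<lambda>_. Q)) (\<lambda>S. \<Prod>l<k. F l (S l)) / real k"
    by simp
  also have "measure_pmf.expectation (Pi_pmf {..<k} s0 (\<lambda>_. Q)) (\<lambda>S. \<Prod>l<k. F l (S l))
      = (\<Prod>l<k. measure_pmf.expectation Q (F l))"
    by (rule expectation_prod_Pi_pmf)
       (auto simp: F_def intro!: integrable_measure_pmf_bounded[where B=1] mult_le_one pmf_le_1)
  also have "(\<Prod>l<k. measure_pmf.expectation Q (F l)) =
      (\<Prod>l<k. if l = j then pmf (bind_pmf Q (\<lambda>s. pair_pmf (E s) (E s))) (X j, z)
        else pmf (bind_pmf Q E) (X l))"
    by (intro prod.cong refl) (auto simp: F_def pmf_bind pmf_pair)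
  also have "\<dots> = pmf (bind_pmf Q (\<lambda>s. pair_pmf (E s) (E s))) (X j, z)
      * (\<Prod>l\<in>{..<k}-{j}. pmf (bind_pmf Q E) (X l))"
    using True by (subst prod.remove[of _ j]) (auto intro!: prod.cong)
  finally show ?thesis using True by simp
next
  case False
  then consider "\<not> j < k" | (outside) "\<not> (\<forall>l. l \<notin> {..<k} \<longrightarrow> X l = x0)" by blast
  then show ?thesis
  proof cases
    case outside
    then show ?thesis
      unfolding pmf_singleton_task_eq_expectation[OF assms] if_not_P[OF outside] by auto
  qed (simp add: pmf_singleton_task_eq_expectation[OF assms])
qed

lemma pmf_singleton_task_le_swap_label:
  assumes "k \<ge> 1" "G < k"
    and "pmf (bind_pmf Q E) (X G) * pmf (bind_pmf Q (\<lambda>s. pair_pmf (E s) (E s))) (X j, z)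
      \<le> pmf (bind_pmf Q E) (X j) * pmf (bind_pmf Q (\<lambda>s. pair_pmf (E s) (E s))) (X G, z)"
  shows "pmf (singleton_task k s0 Q x0 E) (X, j, z) \<le> pmf (singleton_task k s0 Q x0 E) (X, G, z)"
proof (cases "j < k \<and> (\<forall>l. l \<notin> {..<k} \<longrightarrow> X l = x0) \<and> j \<noteq> G")
  case True
  define m where "m = pmf (bind_pmf Q E)"
  define p where "p = pmf (bind_pmf Q (\<lambda>s. pair_pmf (E s) (E s)))"
  define c where "c = (\<Prod>l\<in>{..<k}-{j}-{G}. m (X l))"
  have "0 \<le> c" by (simp add: c_def m_def prod_nonneg)
  have "(\<Prod>l\<in>{..<k}-{j}. m (X l)) = m (X G) * c"
    unfolding c_def using assms(2) True by (subst prod.remove[of _ G]) auto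
  then have lhs: "pmf (singleton_task k s0 Q x0 E) (X, j, z) = c * (m (X G) * p (X j, z)) / k"
    using assms(1) True by (simp add: pmf_singleton_task m_def p_def)
  have "{..<k}-{G}-{j} = {..<k}-{j}-{G}" by auto
  then have "(\<Prod>l\<in>{..<k}-{G}. m (X l)) = m (X j) * c"
    unfolding c_def using True by (subst prod.remove[of _ j]) auto
  then have rhs: "pmf (singleton_task k s0 Q x0 E) (X, G, z) = c * (m (X j) * p (X G, z)) / k"
    using assms(1,2) True by (simp add: pmf_singleton_task m_def p_def)
  show ?thesis
    unfolding lhs rhs using assms(3) \<open>0 \<le> c\<close>
    by (intro divide_right_mono mult_left_mono) (simp_all add: m_def p_def)
next
  case False
  then have "j = G \<or> pmf (singleton_task k s0 Q x0 E) (X, j, z) = 0"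
    using assms(1) by (auto simp: pmf_singleton_task)
  then show ?thesis by auto
qed

definition hypercube :: "nat \<Rightarrow> point set" where
  "hypercube d = {x. \<forall>i\<ge>d. \<not> x i}"

lemma finite_hypercube: "finite (hypercube d)"
proof -
  have "hypercube d = PiE_dflt {..<d} False (\<lambda>_. UNIV)"
    by (auto simp: hypercube_def PiE_dflt_def not_less)
  then show ?thesis by auto
qed

lemma subpop_index_set_bounded:
  assumes "s \<in> set_pmf (subpop_pmf d \<rho>)" "d \<le> i"
  shows "\<not> fst s i"
  using assms set_Pi_pmf_subset[of "{..<d}" False "\<lambda>_. bernoulli_pmf \<rho>"]
  by (force simp: subpop_pmf_def)

definition coord_pmf :: "bool \<Rightarrow> bool \<Rightarrow> bool pmf" where
  "coord_pmf a c = (if a then return_pmf c else bernoulli_pmf (1/2))"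

lemma example_pmf_eq_Pi_pmf:
  assumes "\<And>i. d \<le> i \<Longrightarrow> \<not> I i"
  shows "example_pmf d (I, b) = Pi_pmf {..<d} False (\<lambda>i. coord_pmf (I i) (b i))"
proof -
  have "Pi_pmf {..<d} False (\<lambda>i. coord_pmf (I i) (b i))
      = Pi_pmf {..<d} False (\<lambda>i. bind_pmf (bernoulli_pmf (1/2)) (\<lambda>c. return_pmf (if I i then b i else c)))"
    by (intro Pi_pmf_cong) (auto simp: coord_pmf_def bind_return_pmf')
  also have "\<dots> = bind_pmf (Pi_pmf {..<d} False (\<lambda>_. bernoulli_pmf (1/2)))
       (\<lambda>u. Pi_pmf {..<d} False (\<lambda>i. return_pmf (if I i then b i else u i)))"
    by (rule Pi_pmf_bind) simp
  also have "\<dots> = example_pmf d (I, b)"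
    unfolding example_pmf_def
  proof (intro bind_pmf_cong refl)
    fix u assume "u \<in> set_pmf (Pi_pmf {..<d} False (\<lambda>_. bernoulli_pmf (1/2)))"
    then have "u i = False" if "d \<le> i" for i
      using set_Pi_pmf_subset[of "{..<d}" False] that by force
    then show "Pi_pmf {..<d} False (\<lambda>i. return_pmf (if I i then b i else u i)) =
        return_pmf (\<lambda>i. if fst (I, b) i then snd (I, b) i else u i)"
      using assms by (auto intro!: arg_cong[where f=return_pmf] simp: fun_eq_iff not_less)
  qed
  finally show ?thesis ..
qed

lemma pmf_example_pmf:
  assumes "s \<in> set_pmf (subpop_pmf d \<rho>)"
  shows "pmf (example_pmf d s) x =
    (if x \<in> hypercube d then \<Prod>i<d. pmf (coord_pmf (fst s i) (snd s i)) (x i) else 0)"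
proof -
  obtain I b where s: "s = (I, b)" by fastforce
  have "\<And>i. d \<le> i \<Longrightarrow> \<not> I i"
    using subpop_index_set_bounded[OF assms] s by auto
  then show ?thesis
    by (auto simp: s example_pmf_eq_Pi_pmf pmf_Pi hypercube_def not_less)
qed

lemma set_example_pmf_subset:
  "s \<in> set_pmf (subpop_pmf d \<rho>) \<Longrightarrow> set_pmf (example_pmf d s) \<subseteq> hypercube d"
  by (auto simp: set_pmf_eq pmf_example_pmf)

lemma expectation_subpop_prod:
  fixes h :: "nat \<Rightarrow> bool \<Rightarrow> bool \<Rightarrow> real"
  assumes "0 \<le> \<rho>" "\<rho> \<le> 1" and h0: "\<And>i a c. 0 \<le> h i a c" and h1: "\<And>i a c. h i a c \<le> 1"
  shows "measure_pmf.expectation (subpop_pmf d \<rho>) (\<lambda>s. \<Prod>i<d. h i (fst s i) (snd s i))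
     = (\<Prod>i<d. \<rho> * ((h i True True + h i True False) / 2) + (1 - \<rho>) * h i False False)"
proof -
  define avg where "avg = (\<lambda>i a. if a then (h i True True + h i True False) / 2 else h i False False)"
  have avg_01: "0 \<le> avg i a" "avg i a \<le> 1" for i a
    using h0 h1[of i True True] h1[of i True False] h1[of i False False] by (auto simp: avg_def)
  have prod_01: "0 \<le> (\<Prod>i<d. h i (I i) (b i))" "(\<Prod>i<d. h i (I i) (b i)) \<le> 1" for I b
    by (auto intro: prod_nonneg prod_le_1 h0 h1)
  have inner: "measure_pmf.expectation (Pi_pmf {i. i < d \<and> I i} False (\<lambda>_. bernoulli_pmf (1/2)))
        (\<lambda>b. \<Prod>i<d. h i (I i) (b i)) = (\<Prod>i<d. avg i (I i))" for I
  proof -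
    have "Pi_pmf {i. i < d \<and> I i} False (\<lambda>_. bernoulli_pmf (1/2))
        = Pi_pmf {..<d} False (\<lambda>i. if I i then bernoulli_pmf (1/2) else return_pmf False)"
      by (subst Pi_pmf_if_set) (auto intro!: arg_cong[where f="\<lambda>A. Pi_pmf A _ _"])
    also have "measure_pmf.expectation \<dots> (\<lambda>b. \<Prod>i<d. h i (I i) (b i))
       = (\<Prod>i<d. measure_pmf.expectation (if I i then bernoulli_pmf (1/2) else return_pmf False) (h i (I i)))"
      by (rule expectation_prod_Pi_pmf) (auto intro: integrable_measure_pmf_bounded h0 h1)
    also have "\<dots> = (\<Prod>i<d. avg i (I i))"
      by (intro prod.cong refl) (auto simp: avg_def)
    finally show ?thesis .
  qed
  have "measure_pmf.expectation (subpop_pmf d \<rho>) (\<lambda>s. \<Prod>i<d. h i (fst s i) (snd s i))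
     = measure_pmf.expectation (Pi_pmf {..<d} False (\<lambda>_. bernoulli_pmf \<rho>)) (\<lambda>I. \<Prod>i<d. avg i (I i))"
    unfolding subpop_pmf_def
    by (simp add: expectation_bind_pmf_bounded[where B=1] prod_01 inner)
  also have "\<dots> = (\<Prod>i<d. measure_pmf.expectation (bernoulli_pmf \<rho>) (avg i))"
    by (rule expectation_prod_Pi_pmf) (auto intro: integrable_measure_pmf_bounded avg_01)
  also have "\<dots> = (\<Prod>i<d. \<rho> * ((h i True True + h i True False) / 2) + (1 - \<rho>) * h i False False)"
    using assms(1,2) by (intro prod.cong refl) (auto simp: avg_def algebra_simps)
  finally show ?thesis .
qed

lemma pmf_bind_example_pmf:
  assumes "0 \<le> \<rho>" "\<rho> \<le> 1"
  shows "pmf (bind_pmf (subpop_pmf d \<rho>) (example_pmf d)) x =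
    (if x \<in> hypercube d then (1/2) ^ d else 0)"
proof (cases "x \<in> hypercube d")
  case True
  have "pmf (bind_pmf (subpop_pmf d \<rho>) (example_pmf d)) x =
      measure_pmf.expectation (subpop_pmf d \<rho>)
        (\<lambda>s. \<Prod>i<d. pmf (coord_pmf (fst s i) (snd s i)) (x i))"
    unfolding pmf_bind using True
    by (intro integral_cong_AE) (auto intro!: AE_pmfI simp: pmf_example_pmf)
  also have "\<dots> = (\<Prod>i<d. \<rho> * ((pmf (return_pmf True) (x i) + pmf (return_pmf False) (x i)) / 2)
      + (1 - \<rho>) * (1/2))"
    using assms by (subst expectation_subpop_prod) (auto simp: coord_pmf_def pmf_le_1)
  also have "\<dots> = (1/2) ^ d"
  proof -
    have "\<rho> * ((pmf (return_pmf True) y + pmf (return_pmf False) y) / 2) + (1 - \<rho>) * (1/2) = 1/2"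
      for y by (cases y) (simp_all add: field_simps)
    then show ?thesis by (simp only: prod_constant card_lessThan)
  qed
  finally show ?thesis using True by simp
next
  case False
  then show ?thesis
    unfolding pmf_bind by (auto intro!: integral_eq_zero_AE AE_pmfI simp: pmf_example_pmf)
qed

lemma hamming_le: "hamming d x z \<le> d"
  using card_mono[of "{..<d}" "{i. i < d \<and> x i \<noteq> z i}"] by (auto simp: hamming_def)

lemma prod_if_eq_eq_hamming:
  "(\<Prod>i<d. if x i = z i then b else a) = a ^ hamming d x z * b ^ (d - hamming d x z)"
proof -
  let ?D = "{i. i < d \<and> x i \<noteq> z i}"
  have card_complement: "card ({..<d} - ?D) = d - hamming d x z"
    unfolding hamming_def by (subst card_Diff_subset) auto
  have "(\<Prod>i<d. if x i = z i then b else a) = (\<Prod>i\<in>{..<d} - ?D. b) * (\<Prod>i\<in>?D. a)"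
    by (subst prod.subset_diff[of ?D]) (auto intro!: arg_cong2[where f="(*)"] prod.cong)
  also have "\<dots> = b ^ (d - hamming d x z) * a ^ hamming d x z"
    unfolding prod_constant card_complement hamming_def ..
  finally show ?thesis by (simp only: mult.commute)
qed

lemma pmf_bind_pair_example_pmf:
  assumes "0 \<le> \<rho>" "\<rho> \<le> 1"
  shows "pmf (bind_pmf (subpop_pmf d \<rho>) (\<lambda>s. pair_pmf (example_pmf d s) (example_pmf d s))) (x, z) =
    (if x \<in> hypercube d \<and> z \<in> hypercube d
     then ((1 - \<rho>) / 4) ^ hamming d x z * (\<rho> / 2 + (1 - \<rho>) / 4) ^ (d - hamming d x z)
     else 0)"
proof (cases "x \<in> hypercube d \<and> z \<in> hypercube d")
  case True
  have "pmf (bind_pmf (subpop_pmf d \<rho>) (\<lambda>s. pair_pmf (example_pmf d s) (example_pmf d s))) (x, z) =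
      measure_pmf.expectation (subpop_pmf d \<rho>) (\<lambda>s. \<Prod>i<d.
        pmf (coord_pmf (fst s i) (snd s i)) (x i) * pmf (coord_pmf (fst s i) (snd s i)) (z i))"
    unfolding pmf_bind pmf_pair using True
    by (intro integral_cong_AE) (auto intro!: AE_pmfI simp: pmf_example_pmf prod.distrib)
  also have "\<dots> = (\<Prod>i<d. if x i = z i then \<rho> / 2 + (1 - \<rho>) / 4 else (1 - \<rho>) / 4)"
    using assms
    by (subst expectation_subpop_prod)
       (auto simp: coord_pmf_def pmf_le_1 mult_le_one intro!: prod.cong)
  finally show ?thesis using True by (simp add: prod_if_eq_eq_hamming)
next
  case False
  then show ?thesis
    unfolding pmf_bind pmf_pair
    by (auto intro!: integral_eq_zero_AE AE_pmfI simp: pmf_example_pmf)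
qed

lemma nearer_example_more_likely:
  assumes "0 \<le> \<rho>" "\<rho> \<le> 1" and "hamming d x z \<le> hamming d y z"
  shows "pmf (bind_pmf (subpop_pmf d \<rho>) (example_pmf d)) x
      * pmf (bind_pmf (subpop_pmf d \<rho>) (\<lambda>s. pair_pmf (example_pmf d s) (example_pmf d s))) (y, z)
    \<le> pmf (bind_pmf (subpop_pmf d \<rho>) (example_pmf d)) y
      * pmf (bind_pmf (subpop_pmf d \<rho>) (\<lambda>s. pair_pmf (example_pmf d s) (example_pmf d s))) (x, z)"
proof (cases "x \<in> hypercube d \<and> y \<in> hypercube d \<and> z \<in> hypercube d")
  case True
  have "((1 - \<rho>) / 4) ^ hamming d y z * (\<rho> / 2 + (1 - \<rho>) / 4) ^ (d - hamming d y z)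
      \<le> ((1 - \<rho>) / 4) ^ hamming d x z * (\<rho> / 2 + (1 - \<rho>) / 4) ^ (d - hamming d x z)"
    using assms hamming_le by (intro power_mult_power_antimono) auto
  then show ?thesis
    using assms(1,2) True by (simp add: pmf_bind_example_pmf pmf_bind_pair_example_pmf)
next
  case False
  then show ?thesis
    using assms(1,2) by (auto simp: pmf_bind_example_pmf pmf_bind_pair_example_pmf)
qed

lemma finite_set_sing_pmf:
  assumes "k \<ge> 1"
  shows "finite (set_pmf (sing_pmf k d \<rho>))"
proof (rule finite_subset)
  show "set_pmf (sing_pmf k d \<rho>)
      \<subseteq> PiE_dflt {..<k} (\<lambda>_. False) (\<lambda>_. hypercube d) \<times> {..<k} \<times> hypercube d"
  proof
    fix t assume "t \<in> set_pmf (sing_pmf k d \<rho>)"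
    then obtain S X j z where t: "t = (X, j, z)" and
      S: "S \<in> set_pmf (Pi_pmf {..<k} (\<lambda>_. False, \<lambda>_. False) (\<lambda>_. subpop_pmf d \<rho>))"
      and X: "X \<in> set_pmf (Pi_pmf {..<k} (\<lambda>_. False) (\<lambda>j. example_pmf d (S j)))"
      and j: "j \<in> set_pmf (pmf_of_set {..<k})" and z: "z \<in> set_pmf (example_pmf d (S j))"
      unfolding sing_pmf_def set_bind_pmf set_return_pmf by blast
    have "{..<k} \<noteq> {}" using assms by (simp add: lessThan_empty_iff)
    then have "j < k" using j by simp
    have "S \<in> PiE_dflt {..<k} (\<lambda>_. False, \<lambda>_. False) (\<lambda>_. set_pmf (subpop_pmf d \<rho>))"
      using S by (simp add: set_Pi_pmf o_def)
    then have subpop: "S l \<in> set_pmf (subpop_pmf d \<rho>)" if "l < k" for l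
      using that by (simp add: PiE_dflt_def)
    have "X \<in> PiE_dflt {..<k} (\<lambda>_. False) (\<lambda>j. set_pmf (example_pmf d (S j)))"
      using X by (simp add: set_Pi_pmf o_def)
    then have "X \<in> PiE_dflt {..<k} (\<lambda>_. False) (\<lambda>_. hypercube d)"
      using subsetD[OF set_example_pmf_subset[OF subpop]] by (auto simp: PiE_dflt_def)
    moreover have "z \<in> hypercube d"
      using subsetD[OF set_example_pmf_subset[OF subpop[OF \<open>j < k\<close>]] z] .
    ultimately show "t \<in> PiE_dflt {..<k} (\<lambda>_. False) (\<lambda>_. hypercube d) \<times> {..<k} \<times> hypercube d"
      using \<open>j < k\<close> t by simp
  qed
qed (auto intro: finite_hypercube)

lemma sing_pmf_le_nearest_neighbor:
  assumes "k \<ge> 1" "0 \<le> \<rho>" "\<rho> \<le> 1" and "nearest_neighbor_rule k d g"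
  shows "pmf (sing_pmf k d \<rho>) (X, j, z) \<le> pmf (sing_pmf k d \<rho>) (X, g X z, z)"
proof (cases "j < k")
  case True
  with assms(4) have "g X z < k" "hamming d (X (g X z)) z \<le> hamming d (X j) z"
    by (auto simp: nearest_neighbor_rule_def)
  then show ?thesis
    unfolding sing_pmf_eq_singleton_task using assms(1-3)
    by (intro pmf_singleton_task_le_swap_label nearer_example_more_likely)
next
  case False
  then have "pmf (sing_pmf k d \<rho>) (X, j, z) = 0"
    using assms(1) by (simp add: sing_pmf_eq_singleton_task pmf_singleton_task)
  then show ?thesis by simp
qed

theorem proposition4p1:
  fixes k d :: nat and \<rho> :: real
    and g :: "(nat \<Rightarrow> point) \<Rightarrow> point \<Rightarrow> nat"
    and L :: "(nat \<Rightarrow> point) \<Rightarrow> point \<Rightarrow> nat pmf"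
  assumes "k \<ge> 1" and "0 \<le> \<rho>" and "\<rho> \<le> 1"
    and "nearest_neighbor_rule k d g"
  shows "success_prob k d \<rho> L \<le> success_prob k d \<rho> (\<lambda>X z. return_pmf (g X z))"
  unfolding success_prob_def
  using finite_set_sing_pmf[OF assms(1)] sing_pmf_le_nearest_neighbor[OF assms]
  by (rule expectation_randomized_rule_le_MAP_rule)

end
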